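(* Let $\mathbf C$ be a clone $\tau$-algebra and let $c\in C$ be $n$-central for some $n$. Then $c$ has finite dimension and $\gamma(c)\le n$.
   Context: A clone $\tau$-algebra is an algebra $\mathbf C=(C,\sigma^{\mathbf C}\ (\sigma\in\tau),q_n^{\mathbf C}\ (n\ge0),\mathsf e_i^{\mathbf C}\ (i\ge1))$ with $\mathsf e_i$ nullary, $q_n$ of arity $n+1$, satisfying: (C1) $q_n(\mathsf e_i,x_1,\dots,x_n)=x_i$ ($1\le i\le n$); (C2) $q_n(\mathsf e_j,x_1,\dots,x_n)=\mathsf e_j$ ($j>n$); (C3) $q_n(x,\mathsf e_1,\dots,\mathsf e_n)=x$; (C4) $q_k(x,y_1,\dots,y_k)=q_n(x,y_1,\dots,y_k,\mathsf e_{k+1},\dots,\mathsf e_n)$ ($n>k$); (C5) $q_n(q_n(x,\mathbf y),\mathbf z)=q_n(x,q_n(y_1,\mathbf z),\dots,q_n(y_n,\mathbf z))$; (C6) $q_n(\sigma(x_1,\dots,x_k),\mathbf y)=\sigma(q_n(x_1,\mathbf y),\dots,q_n(x_k,\mathbf y))$ for $\sigma\in\tau$ of arity $k$. An element $a$ is independent of $\mathsf e_n$ if $q_n(a,\mathsf e_1,\dots,\mathsf e_{n-1},\mathsf e_{n+1})=a$, dependent otherwise; $\gamma(a)$ is $\omega$ if $a$ depends on infinitely many $\mathsf e_i$, $0$ if on none, otherwise the largest $i$ with $a$ dependent on $\mathsf e_i$; $a$ has finite dimension if $\gamma(a)<\omega$. For $a,b\in C$, $\theta(a,b)$ is the smallest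 congruence containing $(a,b)$. An element $c$ is $n$-central if $\theta(c,\mathsf e_1),\dots,\theta(c,\mathsf e_n)$ is an $n$-tuple of complementary factor congruences: their intersection is the identity and for all $a_1,\dots,a_n\in C$ there is a unique $u$ with $a_i\,\theta(c,\mathsf e_i)\,u$ for all $i$; equivalently, $(a_1,\dots,a_n)\mapsto q_n(c,a_1,\dots,a_n)$ is a homomorphism $\mathbf C^n\to\mathbf C$ satisfying $q_n(c,x,\dots,x)=x$ and $q_n(c,q_n(c,x_{11},\dots,x_{1n}),\dots,q_n(c,x_{n1},\dots,x_{nn}))=q_n(c,x_{11},\dots,x_{nn})$. *)

theory Defs
  imports Main "HOL-Library.Extended_Nat"
begin

text \<open>The signature tau is a type 's of operation symbols with arity function ar;
  sig s xs interprets symbol s on an argument list xs of length ar s.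
  q n x ys interprets q_n (arity n+1) on x and the list ys = [y_1,...,y_n] (length n);
  e i interprets the nullary constant e_i (i >= 1).  Values of q n x ys for
  length ys different from n, of sig s xs for length xs different from ar s, and of e 0
  are irrelevant junk.\<close>

definition clone_algebra ::
  "('s \<Rightarrow> nat) \<Rightarrow> ('s \<Rightarrow> 'a list \<Rightarrow> 'a) \<Rightarrow> (nat \<Rightarrow> 'a \<Rightarrow> 'a list \<Rightarrow> 'a) \<Rightarrow> (nat \<Rightarrow> 'a) \<Rightarrow> bool"
where
  "clone_algebra ar sig q e \<longleftrightarrow>
     (\<forall>n i xs. length xs = n \<and> 1 \<le> i \<and> i \<le> n \<longrightarrow> q n (e i) xs = xs ! (i - 1)) \<and>
     (\<forall>n j xs. length xs = n \<and> j > n \<longrightarrow> q n (e j) xs = e j) \<and>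
     (\<forall>n x. q n x (map e [1..<n+1]) = x) \<and>
     (\<forall>k n x ys. k < n \<and> length ys = k \<longrightarrow> q k x ys = q n x (ys @ map e [k+1..<n+1])) \<and>
     (\<forall>n x ys zs. length ys = n \<and> length zs = n \<longrightarrow>
         q n (q n x ys) zs = q n x (map (\<lambda>y. q n y zs) ys)) \<and>
     (\<forall>n s xs ys. length xs = ar s \<and> length ys = n \<longrightarrow>
         q n (sig s xs) ys = sig s (map (\<lambda>x. q n x ys) xs))"

definition is_congruence ::
  "('s \<Rightarrow> nat) \<Rightarrow> ('s \<Rightarrow> 'a list \<Rightarrow> 'a) \<Rightarrow> (nat \<Rightarrow> 'a \<Rightarrow> 'a list \<Rightarrow> 'a) \<Rightarrow> (nat \<Rightarrow> 'a) \<Rightarrow> ('a \<times> 'a) set \<Rightarrow> bool"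
where
  "is_congruence ar sig q e R \<longleftrightarrow>
     equiv UNIV R \<and>
     (\<forall>s xs ys. length xs = ar s \<and> length ys = ar s \<and> list_all2 (\<lambda>a b. (a, b) \<in> R) xs ys
        \<longrightarrow> (sig s xs, sig s ys) \<in> R) \<and>
     (\<forall>n x x' ys ys'. (x, x') \<in> R \<and> length ys = n \<and> length ys' = n \<and>
        list_all2 (\<lambda>a b. (a, b) \<in> R) ys ys' \<longrightarrow> (q n x ys, q n x' ys') \<in> R)"

definition cg ::
  "('s \<Rightarrow> nat) \<Rightarrow> ('s \<Rightarrow> 'a list \<Rightarrow> 'a) \<Rightarrow> (nat \<Rightarrow> 'a \<Rightarrow> 'a list \<Rightarrow> 'a) \<Rightarrow> (nat \<Rightarrow> 'a) \<Rightarrow> 'a \<Rightarrow> 'a \<Rightarrow> ('a \<times> 'a) set"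
where
  "cg ar sig q e a b = \<Inter>{R. is_congruence ar sig q e R \<and> (a, b) \<in> R}"

text \<open>c is n-central: theta(c,e_1),...,theta(c,e_n) are complementary factor congruences.\<close>
definition n_central ::
  "('s \<Rightarrow> nat) \<Rightarrow> ('s \<Rightarrow> 'a list \<Rightarrow> 'a) \<Rightarrow> (nat \<Rightarrow> 'a \<Rightarrow> 'a list \<Rightarrow> 'a) \<Rightarrow> (nat \<Rightarrow> 'a) \<Rightarrow> nat \<Rightarrow> 'a \<Rightarrow> bool"
where
  "n_central ar sig q e n c \<longleftrightarrow>
     (\<Inter>i\<in>{1..n}. cg ar sig q e c (e i)) = Id \<and>
     (\<forall>as. length as = n \<longrightarrow>
        (\<exists>!u. \<forall>i\<in>{1..n}. (as ! (i - 1), u) \<in> cg ar sig q e c (e i)))"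

definition independent :: "(nat \<Rightarrow> 'a \<Rightarrow> 'a list \<Rightarrow> 'a) \<Rightarrow> (nat \<Rightarrow> 'a) \<Rightarrow> 'a \<Rightarrow> nat \<Rightarrow> bool"
where
  "independent q e a n \<longleftrightarrow> q n a (map e [1..<n] @ [e (n + 1)]) = a"

definition dep_set :: "(nat \<Rightarrow> 'a \<Rightarrow> 'a list \<Rightarrow> 'a) \<Rightarrow> (nat \<Rightarrow> 'a) \<Rightarrow> 'a \<Rightarrow> nat set"
where
  "dep_set q e a = {i. 1 \<le> i \<and> \<not> independent q e a i}"

definition gamma :: "(nat \<Rightarrow> 'a \<Rightarrow> 'a list \<Rightarrow> 'a) \<Rightarrow> (nat \<Rightarrow> 'a) \<Rightarrow> 'a \<Rightarrow> enat"
where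
  "gamma q e a =
     (if infinite (dep_set q e a) then \<infinity>
      else if dep_set q e a = {} then 0
      else enat (Max (dep_set q e a)))"

definition finite_dimension :: "(nat \<Rightarrow> 'a \<Rightarrow> 'a list \<Rightarrow> 'a) \<Rightarrow> (nat \<Rightarrow> 'a) \<Rightarrow> 'a \<Rightarrow> bool"
where
  "finite_dimension q e a \<longleftrightarrow> gamma q e a < \<infinity>"

end

theory Submission
  imports Defs
begin

text \<open>For \<open>m > n\<close> let \<open>t = q\<^sub>m(c, e\<^sub>1, \<dots>, e\<^sub>m\<^sub>-\<^sub>1, e\<^sub>m\<^sub>+\<^sub>1)\<close>.
  Modulo \<open>\<theta>(c, e\<^sub>i)\<close> with \<open>i \<le> n\<close> we may replace \<open>c\<close> by \<open>e\<^sub>i\<close>, and \<open>q\<^sub>m\<close> applied to \<open>e\<^sub>i\<close>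
  returns its \<open>i\<close>-th argument, which is \<open>e\<^sub>i\<close> again. Hence \<open>t\<close> and \<open>c\<close> are related by every
  \<open>\<theta>(c, e\<^sub>i)\<close> with \<open>1 \<le> i \<le> n\<close>; as these intersect to the identity, \<open>t = c\<close>, i.e. \<open>c\<close> is
  independent of every \<open>e\<^sub>m\<close> with \<open>m > n\<close>.\<close>

lemma clone_algebra_q_e_nth:
  assumes "clone_algebra ar sig q e" "1 \<le> i" "i \<le> length xs"
  shows "q (length xs) (e i) xs = xs ! (i - 1)"
  using assms unfolding clone_algebra_def by simp

lemma congruence_equiv:
  "is_congruence ar sig q e R \<Longrightarrow> equiv UNIV R"
  unfolding is_congruence_def by simp

lemma congruence_q:
  assumes "is_congruence ar sig q e R" "(x, x') \<in> R" "length ys' = length ys"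
    and "list_all2 (\<lambda>a b. (a, b) \<in> R) ys ys'"
  shows "(q (length ys) x ys, q (length ys) x' ys') \<in> R"
  using assms unfolding is_congruence_def by simp

lemma congruence_q_projection:
  assumes ca: "clone_algebra ar sig q e"
    and R: "is_congruence ar sig q e R" "(c, e i) \<in> R"
    and i: "1 \<le> i" "i \<le> length ys"
  shows "(q (length ys) c ys, ys ! (i - 1)) \<in> R"
proof -
  have "list_all2 (\<lambda>a b. (a, b) \<in> R) ys ys"
    using congruence_equiv[OF R(1)] by (intro list_all2_refl) (meson UNIV_I equiv_def refl_onD)
  then have "(q (length ys) c ys, q (length ys) (e i) ys) \<in> R"
    using congruence_q[OF R] by blast
  then show ?thesis
    using clone_algebra_q_e_nth[OF ca i] by simp
qed

lemma n_central_eqI: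
  assumes "n_central ar sig q e n c"
    and "\<And>i. i \<in> {1..n} \<Longrightarrow> (x, y) \<in> cg ar sig q e c (e i)"
  shows "x = y"
proof -
  have "(x, y) \<in> (\<Inter>i\<in>{1..n}. cg ar sig q e c (e i))"
    using assms(2) by blast
  moreover have "(\<Inter>i\<in>{1..n}. cg ar sig q e c (e i)) = Id"
    using assms(1) unfolding n_central_def by (rule conjunct1)
  ultimately show ?thesis
    by (metis IdD)
qed

lemma n_central_independent:
  assumes ca: "clone_algebra ar sig q e"
    and nc: "n_central ar sig q e n c"
    and m: "n < m"
  shows "independent q e c m"
proof -
  define ys where "ys = map e [1..<m] @ [e (m + 1)]"
  have len: "length ys = m"
    using m by (simp add: ys_def)
  have "(q m c ys, c) \<in> cg ar sig q e c (e i)" if i: "i \<in> {1..n}" for i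
    unfolding cg_def
  proof (intro InterI, clarify)
    fix R
    assume R: "is_congruence ar sig q e R" "(c, e i) \<in> R"
    have "ys ! (i - 1) = e i"
      using i m by (auto simp: ys_def nth_append)
    then have "(q m c ys, e i) \<in> R"
      using congruence_q_projection[OF ca R, of ys] i m len by auto
    with R show "(q m c ys, c) \<in> R"
      using congruence_equiv[OF R(1)] by (meson equiv_def symD transD)
  qed
  then have "q m c ys = c"
    using n_central_eqI[OF nc] by blast
  then show ?thesis
    unfolding independent_def ys_def .
qed

lemma gamma_le_if_dep_set_subset:
  assumes sub: "dep_set q e a \<subseteq> {1..n}"
  shows "finite_dimension q e a \<and> gamma q e a \<le> enat n"
proof -
  have fin: "finite (dep_set q e a)"
    using sub finite_subset by blast
  have "gamma q e a \<le> enat n"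
  proof (cases "dep_set q e a = {}")
    case True
    then show ?thesis by (simp add: gamma_def)
  next
    case False
    then have "Max (dep_set q e a) \<le> n"
      using fin sub by (meson Max_in atLeastAtMost_iff subsetD)
    then show ?thesis
      using fin False by (simp add: gamma_def)
  qed
  then show ?thesis
    unfolding finite_dimension_def by (meson enat_ord_code(4) le_less_trans)
qed

theorem lemma11p1:
  fixes ar :: "'s \<Rightarrow> nat" and sig :: "'s \<Rightarrow> 'a list \<Rightarrow> 'a"
    and q :: "nat \<Rightarrow> 'a \<Rightarrow> 'a list \<Rightarrow> 'a" and e :: "nat \<Rightarrow> 'a"
    and n :: nat and c :: 'a
  assumes "clone_algebra ar sig q e"
    and "n_central ar sig q e n c"
  shows "finite_dimension q e c \<and> gamma q e c \<le> enat n"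
proof -
  have "dep_set q e c \<subseteq> {1..n}"
    using n_central_independent[OF assms] unfolding dep_set_def by (auto simp: not_less[symmetric])
  then show ?thesis
    by (rule gamma_le_if_dep_set_subset)
qed

end
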